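(* Let $B\in\mathscr B$, let $\mathsf T_B:=\{\gamma\in\Gamma_B:\ \gamma(t)=\gamma(0)+\int_0^t b(\gamma(\tau))\,d\tau\ \forall t\in[0,T],\ \gamma(0)\notin B,\ \gamma(T)\notin B\}$, let $\eta_B:=\eta\llcorner\mathsf T_B$, let $\rho_B$ be defined by $\rho_B(t,\cdot)\mathscr L^2=(e_t)_\#\eta_B$ for $t\in[0,T]$, and set $r_B(x):=\int_0^T\rho_B(t,x)\,dt$ for $x\in B$. Then $\mathrm{div}(r_Bb)=0$ in $\mathscr D'(B)$.
   Context: $T>0$, $\mathbb T^2=\mathbb R^2/\mathbb Z^2$, $b\colon\mathbb T^2\to\mathbb R^2$ is a bounded, everywhere defined Borel vector field with $b\in\mathrm{BV}(\mathbb T^2)$, nearly incompressible with density $\rho$ (i.e. $\ln\rho\in L^\infty((0,T)\times\mathbb T^2)$ and $\partial_t\rho+\mathrm{div}(\rho b)=0$ in $\mathscr D'((0,T)\times\mathbb T^2)$). $\Gamma:=C([0,T];\mathbb T^2)$, $e_t(\gamma):=\gamma(t)$. $\eta$ is a positive finite Borel measure on $\Gamma$, concentrated on curves satisfying $\gamma(t)=\gamma(0)+\int_0^tb(\gamma(\tau))d\tau$, such that $(e_t)_\#\eta=\rho(t,\cdot)\mathscr L^2$ for every $t$ (such $\eta$ exists by Ambrosio's superposition principle). $\mathscr B:=\{B(x,r): x\in\mathbb Q^2, r\in\mathbb Q^+\}$. For a set $A\subset\mathbb T^2$, $\Gamma_A:=\{\gamma\in\Gamma:\ \mathscr L^1(\{t\in[0,T]:\gamma(t)\in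 A\})>0\}$. *)

theory Defs
  imports "HOL-Analysis.Analysis"
begin

text \<open>The flat torus is represented through the plane: functions on the torus are
  Z^2-periodic functions on real x real, the torus itself is identified with the
  fundamental domain unit_cell via the projection torus_proj.\<close>

definition Z2 :: "(real \<times> real) set" where
  "Z2 = {(real_of_int m, real_of_int n) | m n. True}"

definition periodic2 :: "(real \<times> real \<Rightarrow> 'b) \<Rightarrow> bool" where
  "periodic2 f \<longleftrightarrow> (\<forall>x. \<forall>k\<in>Z2. f (x + k) = f x)"

definition unit_cell :: "(real \<times> real) set" where
  "unit_cell = {0..<1} \<times> {0..<1}"

definition torus_proj :: "real \<times> real \<Rightarrow> real \<times> real" where
  "torus_proj x = (frac (fst x), frac (snd x))"

text \<open>Preimage in the plane of the open torus ball B(c,r).\<close>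
definition torus_ball :: "real \<times> real \<Rightarrow> real \<Rightarrow> (real \<times> real) set" where
  "torus_ball c r = {y. \<exists>k\<in>Z2. dist y (c + k) < r}"

definition tsupport :: "('a::topological_space \<Rightarrow> 'b::zero) \<Rightarrow> 'a set" where
  "tsupport f = closure {x. f x \<noteq> 0}"

fun dderiv :: "'a::real_normed_vector list \<Rightarrow> ('a \<Rightarrow> 'b::real_normed_vector) \<Rightarrow> 'a \<Rightarrow> 'b" where
  "dderiv [] f = f"
| "dderiv (v # vs) f = (\<lambda>x. frechet_derivative (dderiv vs f) (at x) v)"

definition smooth :: "('a::real_normed_vector \<Rightarrow> 'b::real_normed_vector) \<Rightarrow> bool" where
  "smooth f \<longleftrightarrow> (\<forall>vs. (\<forall>x. dderiv vs f differentiable (at x)) \<and> continuous_on UNIV (dderiv vs f))"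

definition divergence :: "(real \<times> real \<Rightarrow> real \<times> real) \<Rightarrow> real \<times> real \<Rightarrow> real" where
  "divergence \<phi> x = (\<Sum>e\<in>Basis. frechet_derivative \<phi> (at x) e \<bullet> e)"

definition torus_BV :: "(real \<times> real \<Rightarrow> real \<times> real) \<Rightarrow> bool" where
  "torus_BV b \<longleftrightarrow> (\<exists>C. \<forall>\<phi>. smooth \<phi> \<and> periodic2 \<phi> \<and> (\<forall>x. norm (\<phi> x) \<le> 1) \<longrightarrow>
      (\<forall>e\<in>Basis. \<bar>LINT x:unit_cell|lborel. (b x \<bullet> e) * divergence \<phi> x\<bar> \<le> C))"

definition spacetime_test :: "real \<Rightarrow> (real \<times> (real \<times> real) \<Rightarrow> real) \<Rightarrow> bool" where
  "spacetime_test T \<phi> \<longleftrightarrow> smooth \<phi> \<and> (\<forall>t x. \<forall>k\<in>Z2. \<phi> (t, x + k) = \<phi> (t, x)) \<and>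
     (\<exists>a c. 0 < a \<and> c < T \<and> (\<forall>t x. \<phi> (t, x) \<noteq> 0 \<longrightarrow> a \<le> t \<and> t \<le> c))"

text \<open>Nearly incompressible with density rho (rho represented on the fundamental domain).\<close>
definition nearly_incompressible ::
  "real \<Rightarrow> (real \<times> real \<Rightarrow> real \<times> real) \<Rightarrow> (real \<Rightarrow> real \<times> real \<Rightarrow> real) \<Rightarrow> bool" where
  "nearly_incompressible T b \<rho> \<longleftrightarrow>
     (\<lambda>tx. \<rho> (fst tx) (snd tx)) \<in> borel_measurable borel \<and>
     (\<exists>C. AE tx in lborel. tx \<in> {0<..<T} \<times> unit_cell \<longrightarrow>
          \<rho> (fst tx) (snd tx) > 0 \<and> \<bar>ln (\<rho> (fst tx) (snd tx))\<bar> \<le> C) \<and>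
     (\<forall>\<phi>. spacetime_test T \<phi> \<longrightarrow>
        (LINT tx:({0<..<T} \<times> unit_cell)|lborel.
            \<rho> (fst tx) (snd tx) * frechet_derivative \<phi> (at tx) (1, b (snd tx))) = 0)"

text \<open>Path space: (lifts of) continuous curves on [0,T], with the Borel sigma-algebra
  (= trace of the cylinder sigma-algebra).\<close>
definition curve_space :: "real \<Rightarrow> (real \<Rightarrow> real \<times> real) measure" where
  "curve_space T = restrict_space (PiM {0..T} (\<lambda>_. lborel)) {\<gamma>. continuous_on {0..T} \<gamma>}"

definition integral_curve :: "(real \<times> real \<Rightarrow> real \<times> real) \<Rightarrow> real \<Rightarrow> (real \<Rightarrow> real \<times> real) \<Rightarrow> bool" where
  "integral_curve b T \<gamma> \<longleftrightarrow> (\<forall>t\<in>{0..T}. ((\<lambda>\<tau>. b (\<gamma> \<tau>)) has_integral (\<gamma> t - \<gamma> 0)) {0..t})"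

definition Gamma_set :: "real \<Rightarrow> (real \<times> real) set \<Rightarrow> (real \<Rightarrow> real \<times> real) set" where
  "Gamma_set T A = {\<gamma>. emeasure lborel {t\<in>{0..T}. \<gamma> t \<in> A} > 0}"

definition crossing_set ::
  "(real \<times> real \<Rightarrow> real \<times> real) \<Rightarrow> real \<Rightarrow> (real \<times> real) set \<Rightarrow> (real \<Rightarrow> real \<times> real) set" where
  "crossing_set b T B = {\<gamma> \<in> Gamma_set T B. integral_curve b T \<gamma> \<and> \<gamma> 0 \<notin> B \<and> \<gamma> T \<notin> B}"

end

theory Submission
  imports Defs
begin

text \<open>
  For a test function \<open>\<phi>\<close> supported in \<open>B\<close>, Fubini turns \<open>\<integral> r\<^sub>B b \<cdot> \<nabla>\<phi>\<close> into the
  \<open>\<eta>\<^sub>B\<close>-integral of \<open>\<integral>\<^sub>0\<^sup>T b(\<gamma>(t)) \<cdot> \<nabla>\<phi>(\<gamma>(t)) dt\<close>.  Along an integral curve the integrand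
  is \<open>(\<phi> \<circ> \<gamma>)'(t)\<close>, so each curve contributes \<open>\<phi>(\<gamma>(T)) - \<phi>(\<gamma>(0))\<close>, which vanishes because
  the curves charged by \<open>\<eta>\<^sub>B\<close> start and end outside \<open>B \<supseteq> supp \<phi>\<close>.
  Since the velocity \<open>b \<circ> \<gamma>\<close> is merely bounded and measurable, the chain rule is proved by
  showing that \<open>\<phi>(\<gamma>(t)) - \<integral>\<^sub>0\<^sup>t b(\<gamma>) \<cdot> \<nabla>\<phi>(\<gamma>)\<close> has derivative zero.
\<close>

section \<open>Chain rule along integral curves\<close>

context
  fixes \<gamma> g :: "real \<Rightarrow> 'a::euclidean_space" and T K :: real
  assumes curve: "\<And>t. t \<in> {0..T} \<Longrightarrow> (g has_integral (\<gamma> t - \<gamma> 0)) {0..t}"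
    and speed: "\<And>\<tau>. \<tau> \<in> {0..T} \<Longrightarrow> norm (g \<tau>) \<le> K"
begin

lemma integral_curve_increment:
  assumes "0 \<le> s" "s \<le> t" "t \<le> T"
  shows "(g has_integral (\<gamma> t - \<gamma> s)) {s..t}"
proof -
  have s: "(g has_integral (\<gamma> s - \<gamma> 0)) {0..s}" and t: "(g has_integral (\<gamma> t - \<gamma> 0)) {0..t}"
    using curve assms by auto
  have "(g has_integral integral {s..t} g) {s..t}"
    using integrable_subinterval_real[OF has_integral_integrable[OF t], of s t] assms by auto
  with has_integral_combine[OF assms(1,2) s] have "(g has_integral (\<gamma> s - \<gamma> 0 + integral {s..t} g)) {0..t}" .
  with t have "integral {s..t} g = \<gamma> t - \<gamma> s"
    by (auto dest: has_integral_unique simp: algebra_simps)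
  with \<open>(g has_integral integral {s..t} g) {s..t}\<close> show ?thesis by simp
qed

lemma integral_curve_lipschitz:
  assumes "0 \<le> s" "s \<le> t" "t \<le> T"
  shows "norm (\<gamma> t - \<gamma> s) \<le> K * (t - s)"
proof -
  have "0 \<le> K" using order_trans[OF norm_ge_zero speed[of s]] assms by simp
  with has_integral_bound_real[OF _ finite.emptyI integral_curve_increment[OF assms]] speed assms
  show ?thesis by simp
qed

lemma integral_curve_increment_estimate:
  fixes \<phi> :: "'a \<Rightarrow> real"
  assumes \<phi>: "\<And>x. (\<phi> has_derivative (\<lambda>v. v \<bullet> grad x)) (at x)"
    and grad_near: "\<And>x. x \<in> ball x0 d \<Longrightarrow> norm (grad x - grad x0) \<le> e"
    and inside: "\<And>\<tau>. \<tau> \<in> {s..t} \<Longrightarrow> \<gamma> \<tau> \<in> ball x0 d"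
    and G: "(\<lambda>\<tau>. g \<tau> \<bullet> grad (\<gamma> \<tau>)) integrable_on {s..t}"
    and st: "0 \<le> s" "s \<le> t" "t \<le> T"
  shows "\<bar>\<phi> (\<gamma> t) - \<phi> (\<gamma> s) - integral {s..t} (\<lambda>\<tau>. g \<tau> \<bullet> grad (\<gamma> \<tau>))\<bar> \<le> 2 * K * e * (t - s)"
proof -
  let ?G = "\<lambda>\<tau>. g \<tau> \<bullet> grad (\<gamma> \<tau>)"
  have x0: "x0 \<in> ball x0 d" using inside[of s] st by (auto intro: le_less_trans[OF zero_le_dist])
  have e: "0 \<le> e" using order_trans[OF norm_ge_zero grad_near[OF x0]] .
  have K: "0 \<le> K" using order_trans[OF norm_ge_zero speed[of s]] st by simp
  have linearisation: "\<bar>\<phi> (\<gamma> t) - \<phi> (\<gamma> s) - (\<gamma> t - \<gamma> s) \<bullet> grad x0\<bar> \<le> norm (\<gamma> t - \<gamma> s) * e"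
  proof (rule differentiable_bound_linearization[where S = "ball x0 d" and f' = "\<lambda>x v. v \<bullet> grad x",
        simplified real_norm_def])
    fix u :: real assume "u \<in> {0..1}"
    then have "\<gamma> s + u *\<^sub>R (\<gamma> t - \<gamma> s) \<in> closed_segment (\<gamma> s) (\<gamma> t)"
      by (auto simp: closed_segment_def algebra_simps intro!: exI[of _ u])
    moreover have "closed_segment (\<gamma> s) (\<gamma> t) \<subseteq> ball x0 d"
      using st by (intro closed_segment_subset inside convex_ball) auto
    ultimately show "\<gamma> s + u *\<^sub>R (\<gamma> t - \<gamma> s) \<in> ball x0 d" by blast
  next
    fix x assume "x \<in> ball x0 d"
    then have "norm (grad x - grad x0) \<le> e" by (rule grad_near)
    then have "\<bar>v \<bullet> (grad x - grad x0)\<bar> \<le> e * norm v" for v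
      by (metis Cauchy_Schwarz_ineq2 mult.commute mult_left_mono norm_ge_zero order_trans)
    then show "onorm ((\<lambda>v. v \<bullet> grad x) - (\<lambda>v. v \<bullet> grad x0)) \<le> e"
      by (intro onorm_le) (simp add: inner_diff_right)
  qed (use x0 in \<open>auto intro: has_derivative_at_withinI \<phi>\<close>)
  have linearised: "((\<lambda>\<tau>. g \<tau> \<bullet> grad x0) has_integral (\<gamma> t - \<gamma> s) \<bullet> grad x0) {s..t}"
    using has_integral_linear[OF integral_curve_increment[OF st] bounded_linear_inner_left]
    by (simp add: o_def)
  with G have diff: "integral {s..t} (\<lambda>\<tau>. g \<tau> \<bullet> grad x0 - ?G \<tau>) = (\<gamma> t - \<gamma> s) \<bullet> grad x0 - integral {s..t} ?G"
    by (simp add: integral_diff integral_unique has_integral_integrable)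
  have pointwise: "norm (g \<tau> \<bullet> grad x0 - ?G \<tau>) \<le> K * e" if "\<tau> \<in> {s..t} - {}" for \<tau>
  proof -
    have "\<bar>g \<tau> \<bullet> grad x0 - ?G \<tau>\<bar> = \<bar>g \<tau> \<bullet> (grad (\<gamma> \<tau>) - grad x0)\<bar>"
      by (simp add: inner_diff_right)
    also have "\<dots> \<le> norm (g \<tau>) * norm (grad (\<gamma> \<tau>) - grad x0)" by (rule Cauchy_Schwarz_ineq2)
    also have "\<dots> \<le> K * e"
      using that st K by (intro mult_mono speed grad_near inside e) auto
    finally show ?thesis by simp
  qed
  have "((\<lambda>\<tau>. g \<tau> \<bullet> grad x0 - ?G \<tau>) has_integral integral {s..t} (\<lambda>\<tau>. g \<tau> \<bullet> grad x0 - ?G \<tau>)) {s..t}"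
    using integrable_diff[OF has_integral_integrable[OF linearised] G] by (rule integrable_integral)
  from has_integral_bound_real[OF _ finite.emptyI this pointwise] K e st
  have "\<bar>integral {s..t} (\<lambda>\<tau>. g \<tau> \<bullet> grad x0 - ?G \<tau>)\<bar> \<le> K * e * (t - s)" by simp
  moreover have "norm (\<gamma> t - \<gamma> s) * e \<le> K * e * (t - s)"
    using mult_right_mono[OF integral_curve_lipschitz[OF st] e] by (simp add: algebra_simps)
  ultimately show ?thesis
    using linearisation diff by (simp add: algebra_simps)
qed

lemma integral_curve_primitive_has_derivative:
  fixes \<phi> :: "'a \<Rightarrow> real"
  assumes \<phi>: "\<And>x. (\<phi> has_derivative (\<lambda>v. v \<bullet> grad x)) (at x)"
    and grad: "continuous_on UNIV grad"
    and G: "(\<lambda>\<tau>. g \<tau> \<bullet> grad (\<gamma> \<tau>)) integrable_on {0..T}"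
    and u: "u \<in> {0..T}"
  shows "((\<lambda>t. \<phi> (\<gamma> t) - integral {0..t} (\<lambda>\<tau>. g \<tau> \<bullet> grad (\<gamma> \<tau>))) has_derivative (\<lambda>h. 0))
    (at u within {0..T})"
proof -
  let ?G = "\<lambda>\<tau>. g \<tau> \<bullet> grad (\<gamma> \<tau>)"
  define H where "H t = \<phi> (\<gamma> t) - integral {0..t} ?G" for t
  have K: "0 \<le> K" using order_trans[OF norm_ge_zero speed[OF u]] .
  have H_diff: "H t - H s = \<phi> (\<gamma> t) - \<phi> (\<gamma> s) - integral {s..t} ?G"
    if "0 \<le> s" "s \<le> t" "t \<le> T" for s t
    using Henstock_Kurzweil_Integration.integral_combine[OF that(1,2)
        integrable_subinterval_real[OF G, of 0 t]] that
    by (simp add: H_def algebra_simps)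
  have "\<exists>\<delta>>0. \<forall>t\<in>{0..T}. norm (t - u) < \<delta> \<longrightarrow> norm (H t - H u - 0) \<le> \<epsilon> * norm (t - u)"
    if "\<epsilon> > 0" for \<epsilon>
  proof -
    define e where "e = \<epsilon> / (2 * K + 1)"
    have e: "e > 0" "2 * K * e \<le> \<epsilon>"
      using \<open>\<epsilon> > 0\<close> K by (auto simp: e_def field_simps)
    obtain d where d: "d > 0" "\<And>x. dist x (\<gamma> u) < d \<Longrightarrow> dist (grad x) (grad (\<gamma> u)) < e"
      using grad e(1) unfolding continuous_on_iff by blast
    have grad_near: "norm (grad x - grad (\<gamma> u)) \<le> e" if "x \<in> ball (\<gamma> u) d" for x
      using d(2)[of x] that by (simp add: dist_norm norm_minus_commute)
    define \<delta> where "\<delta> = d / (K + 1)"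
    have \<delta>: "\<delta> > 0" "K * \<delta> < d" using d(1) K by (auto simp: \<delta>_def field_simps)
    have inside: "\<gamma> \<tau> \<in> ball (\<gamma> u) d" if "\<tau> \<in> {0..T}" "\<bar>\<tau> - u\<bar> < \<delta>" for \<tau>
    proof -
      have "norm (\<gamma> \<tau> - \<gamma> u) \<le> K * \<bar>\<tau> - u\<bar>"
        using integral_curve_lipschitz[of u \<tau>] integral_curve_lipschitz[of \<tau> u] that u
        by (cases "u \<le> \<tau>") (auto simp: norm_minus_commute)
      also have "\<dots> \<le> K * \<delta>" using that K by (intro mult_left_mono) auto
      finally show ?thesis using \<delta> by (simp add: dist_norm norm_minus_commute)
    qed
    have "\<bar>H t - H u\<bar> \<le> \<epsilon> * \<bar>t - u\<bar>" if t: "t \<in> {0..T}" "\<bar>t - u\<bar> < \<delta>" for t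
    proof -
      have close: "\<gamma> \<tau> \<in> ball (\<gamma> u) d" if "\<tau> \<in> {min u t..max u t}" for \<tau>
        using that t u by (intro inside) auto
      have "\<bar>H t - H u\<bar> \<le> 2 * K * e * \<bar>t - u\<bar>"
      proof (cases "u \<le> t")
        case True
        have "\<bar>\<phi> (\<gamma> t) - \<phi> (\<gamma> u) - integral {u..t} ?G\<bar> \<le> 2 * K * e * (t - u)"
          by (rule integral_curve_increment_estimate[OF \<phi> grad_near])
            (use True u t in \<open>auto simp del: mem_ball intro: close integrable_subinterval_real[OF G]\<close>)
        with True show ?thesis using H_diff[of u t] u t by simp
      next
        case False
        have "\<bar>\<phi> (\<gamma> u) - \<phi> (\<gamma> t) - integral {t..u} ?G\<bar> \<le> 2 * K * e * (u - t)"
          by (rule integral_curve_increment_estimate[OF \<phi> grad_near])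
            (use False u t in \<open>auto simp del: mem_ball intro: close integrable_subinterval_real[OF G]\<close>)
        with False show ?thesis using H_diff[of t u] u t by (simp add: abs_minus_commute)
      qed
      also have "\<dots> \<le> \<epsilon> * \<bar>t - u\<bar>" using e by (intro mult_right_mono) auto
      finally show ?thesis .
    qed
    with \<delta>(1) show ?thesis by auto
  qed
  then show ?thesis
    unfolding has_derivative_within_alt H_def[symmetric] by simp
qed

lemma integral_curve_chain_rule:
  fixes \<phi> :: "'a \<Rightarrow> real"
  assumes \<phi>: "\<And>x. (\<phi> has_derivative (\<lambda>v. v \<bullet> grad x)) (at x)"
    and grad: "continuous_on UNIV grad"
    and G: "(\<lambda>\<tau>. g \<tau> \<bullet> grad (\<gamma> \<tau>)) integrable_on {0..T}"
    and T: "0 \<le> T"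
  shows "((\<lambda>\<tau>. g \<tau> \<bullet> grad (\<gamma> \<tau>)) has_integral (\<phi> (\<gamma> T) - \<phi> (\<gamma> 0))) {0..T}"
proof -
  let ?H = "\<lambda>t. \<phi> (\<gamma> t) - integral {0..t} (\<lambda>\<tau>. g \<tau> \<bullet> grad (\<gamma> \<tau>))"
  have "?H T = ?H 0"
    using integral_curve_primitive_has_derivative[OF \<phi> grad G] T
    by (intro has_derivative_zero_unique[OF convex_real_interval(5)]) auto
  then have "integral {0..T} (\<lambda>\<tau>. g \<tau> \<bullet> grad (\<gamma> \<tau>)) = \<phi> (\<gamma> T) - \<phi> (\<gamma> 0)" by simp
  with integrable_integral[OF G] show ?thesis by simp
qed

end

section \<open>Gradients of smooth functions\<close>

definition gradient :: "('a::euclidean_space \<Rightarrow> real) \<Rightarrow> 'a \<Rightarrow> 'a" where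
  "gradient f x = (\<Sum>e\<in>Basis. frechet_derivative f (at x) e *\<^sub>R e)"

lemma frechet_derivative_eq_gradient:
  assumes "f differentiable (at x)"
  shows "frechet_derivative f (at x) = (\<lambda>v. v \<bullet> gradient f x)"
proof
  fix v
  have "linear (frechet_derivative f (at x))"
    using assms frechet_derivative_works has_derivative_linear by blast
  from Linear_Algebra.linear_componentwise[OF this, of v 1]
  show "frechet_derivative f (at x) v = v \<bullet> gradient f x"
    by (simp add: gradient_def inner_sum_right mult.commute)
qed

lemma has_derivative_gradient:
  assumes "f differentiable (at x)"
  shows "(f has_derivative (\<lambda>v. v \<bullet> gradient f x)) (at x)"
  using frechet_derivative_works[THEN iffD1, OF assms]
  unfolding frechet_derivative_eq_gradient[OF assms] .

lemma smooth_differentiable: "smooth f \<Longrightarrow> f differentiable (at x)"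
  unfolding smooth_def using dderiv.simps(1) by metis

lemma smooth_continuous_gradient:
  assumes "smooth f"
  shows "continuous_on UNIV (gradient f)"
proof -
  have "continuous_on UNIV (dderiv [e] f)" for e
    using assms unfolding smooth_def by blast
  then have "continuous_on UNIV (\<lambda>x. frechet_derivative f (at x) e)" for e
    by simp
  then show ?thesis unfolding gradient_def by (intro continuous_intros)
qed

section \<open>Periodic functions on the plane\<close>

lemma torus_proj_eq_shift: "torus_proj x = x + (- of_int \<lfloor>fst x\<rfloor>, - of_int \<lfloor>snd x\<rfloor>)"
  unfolding torus_proj_def by (cases x) (simp add: frac_def)

lemma periodic2_torus_proj:
  assumes "periodic2 f"
  shows "f (torus_proj x) = f x"
proof -
  have "(- of_int \<lfloor>fst x\<rfloor>, - of_int \<lfloor>snd x\<rfloor>) \<in> Z2"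
    unfolding Z2_def by (rule CollectI, rule exI[of _ "- \<lfloor>fst x\<rfloor>"], rule exI[of _ "- \<lfloor>snd x\<rfloor>"]) simp
  then show ?thesis
    unfolding torus_proj_eq_shift by (rule assms[unfolded periodic2_def, rule_format])
qed

lemma torus_proj_in_unit_cell: "torus_proj x \<in> unit_cell"
  unfolding torus_proj_def unit_cell_def by (simp add: frac_lt_1)

lemma torus_proj_unit_cell: "x \<in> unit_cell \<Longrightarrow> torus_proj x = x"
  unfolding torus_proj_def unit_cell_def by (cases x) (simp add: frac_eq)

lemma torus_proj_borel_measurable[measurable]: "torus_proj \<in> borel_measurable borel"
proof -
  have "torus_proj \<in> measurable (borel \<Otimes>\<^sub>M borel) borel"
    unfolding torus_proj_def frac_def by measurable
  then show ?thesis by (simp add: borel_prod)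
qed

lemma unit_cell_borel[measurable]: "unit_cell \<in> sets borel"
  unfolding unit_cell_def borel_prod[symmetric] by (intro pair_measureI) auto

lemma unit_cell_subset_cbox: "unit_cell \<subseteq> cbox (0, 0) (1, 1)"
  unfolding unit_cell_def by (auto simp: cbox_Pair_eq)

lemma bounded_range_periodic2:
  fixes h :: "real \<times> real \<Rightarrow> 'b::metric_space"
  assumes "continuous_on UNIV h" "periodic2 h"
  shows "bounded (range h)"
proof -
  have "h x \<in> h ` cbox (0, 0) (1, 1)" for x
  proof (rule image_eqI)
    show "h x = h (torus_proj x)" using periodic2_torus_proj[OF assms(2), of x] by (rule sym)
    show "torus_proj x \<in> cbox (0, 0) (1, 1)"
      using torus_proj_in_unit_cell unit_cell_subset_cbox by (rule subsetD[rotated])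
  qed
  then have "range h \<subseteq> h ` cbox (0, 0) (1, 1)" by blast
  moreover have "compact (h ` cbox (0, 0) (1, 1))"
    by (rule compact_continuous_image[OF continuous_on_subset[OF assms(1)]]) auto
  ultimately show ?thesis by (meson bounded_subset compact_imp_bounded)
qed

lemma periodic2_frechet_derivative:
  fixes \<phi> :: "real \<times> real \<Rightarrow> 'b::real_normed_vector"
  assumes "periodic2 \<phi>" "\<And>x. \<phi> differentiable (at x)"
  shows "periodic2 (\<lambda>x. frechet_derivative \<phi> (at x))"
  unfolding periodic2_def
proof (intro allI ballI)
  fix x k assume "k \<in> Z2"
  with assms(1) have shift: "(\<lambda>y. \<phi> (y + k)) = \<phi>" unfolding periodic2_def by auto
  have "((\<lambda>y. y + k) has_derivative id) (at x)"
    by (auto intro!: derivative_eq_intros simp: id_def)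
  from has_derivative_compose[OF this frechet_derivative_works[THEN iffD1, OF assms(2)]]
  have "((\<lambda>y. \<phi> (y + k)) has_derivative frechet_derivative \<phi> (at (x + k))) (at x)"
    by (simp add: o_def id_def)
  then have "(\<phi> has_derivative frechet_derivative \<phi> (at (x + k))) (at x)"
    unfolding shift .
  then show "frechet_derivative \<phi> (at (x + k)) = frechet_derivative \<phi> (at x)"
    by (rule frechet_derivative_at)
qed

lemma periodic2_gradient:
  assumes "periodic2 f" "\<And>x. f differentiable (at x)"
  shows "periodic2 (gradient f)"
  using periodic2_frechet_derivative[OF assms] unfolding periodic2_def gradient_def by simp

section \<open>Measurability on the space of curves\<close>

lemma clamp_real_in: "0 \<le> T \<Longrightarrow> clamp 0 T t \<in> {0..T::real}"
  using clamp_in_interval[of 0 T t] by simp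

lemma clamp_real_id: "t \<in> {0..T::real} \<Longrightarrow> clamp 0 T t = t"
  using clamp_cancel_cbox[of t 0 T] by simp

lemma continuous_on_clamp_real:
  fixes f :: "real \<Rightarrow> 'b::metric_space"
  shows "continuous_on {0..T::real} f \<Longrightarrow> continuous_on S (\<lambda>t. f (clamp 0 T t))"
  using clamp_continuous_on[of 0 T f] by simp

lemma floor_grid_tendsto: "(\<lambda>m. of_int \<lfloor>real (Suc m) * t\<rfloor> / real (Suc m)) \<longlonglongrightarrow> t"
proof (rule tendsto_sandwich[OF _ _ _ tendsto_const])
  have "(\<lambda>m. t - inverse (real (Suc m))) \<longlonglongrightarrow> t - 0"
    by (intro tendsto_intros LIMSEQ_inverse_real_of_nat)
  then show "(\<lambda>m. t - inverse (real (Suc m))) \<longlonglongrightarrow> t" by simp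
  have "t - inverse (real (Suc m)) \<le> of_int \<lfloor>real (Suc m) * t\<rfloor> / real (Suc m) \<and>
      of_int \<lfloor>real (Suc m) * t\<rfloor> / real (Suc m) \<le> t" for m
  proof -
    let ?n = "real (Suc m)"
    have "t - inverse ?n = (?n * t - 1) / ?n" "t = (?n * t) / ?n"
      by (simp_all add: field_simps)
    moreover have "?n * t - 1 \<le> of_int \<lfloor>?n * t\<rfloor>" "of_int \<lfloor>?n * t\<rfloor> \<le> ?n * t"
      by linarith+
    ultimately show ?thesis by (metis divide_right_mono of_nat_0_le_iff)
  qed
  then show "\<forall>\<^sub>F m in sequentially. t - inverse (real (Suc m)) \<le> of_int \<lfloor>real (Suc m) * t\<rfloor> / real (Suc m)"
    and "\<forall>\<^sub>F m in sequentially. of_int \<lfloor>real (Suc m) * t\<rfloor> / real (Suc m) \<le> t"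
    by simp_all
qed

lemma curve_space_continuous: "\<gamma> \<in> space (curve_space T) \<Longrightarrow> continuous_on {0..T} \<gamma>"
  unfolding curve_space_def by (simp add: space_restrict_space)

lemma measurable_curve_eval:
  assumes "s \<in> {0..T}"
  shows "(\<lambda>\<gamma>. \<gamma> s) \<in> borel_measurable (curve_space T)"
proof -
  have "(\<lambda>\<gamma>. \<gamma> s) \<in> measurable (curve_space T) lborel"
    unfolding curve_space_def
    by (rule measurable_restrict_space1[OF measurable_component_singleton[OF assms]])
  then show ?thesis by (simp add: measurable_lborel2)
qed

text \<open>Curves are only continuous on \<open>[0, T]\<close>; precomposing with \<open>clamp 0 T\<close> extends them
  continuously to the whole line, which makes evaluation a Caratheodory function of \<open>(\<gamma>, t)\<close>
  and hence jointly measurable.\<close>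

lemma measurable_curve_eval_clamp:
  assumes "0 \<le> T"
  shows "(\<lambda>p. fst p (clamp 0 T (snd p))) \<in> borel_measurable (curve_space T \<Otimes>\<^sub>M lborel)"
proof (rule borel_measurable_LIMSEQ_metric)
  fix m :: nat
  let ?q = "\<lambda>i::int. clamp 0 T (of_int i / real (Suc m))"
  have "(\<lambda>p. fst p (?q i)) \<in> borel_measurable (curve_space T \<Otimes>\<^sub>M lborel)" for i
    using measurable_compose[OF measurable_fst measurable_curve_eval[OF clamp_real_in[OF assms]]] .
  moreover have "(\<lambda>p. \<lfloor>real (Suc m) * snd p\<rfloor>) \<in> measurable (curve_space T \<Otimes>\<^sub>M lborel) (count_space UNIV)"
    by measurable
  ultimately show "(\<lambda>p. fst p (?q \<lfloor>real (Suc m) * snd p\<rfloor>)) \<in> borel_measurable (curve_space T \<Otimes>\<^sub>M lborel)"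
    by (rule measurable_compose_countable') auto
next
  fix p :: "(real \<Rightarrow> real \<times> real) \<times> real"
  assume "p \<in> space (curve_space T \<Otimes>\<^sub>M lborel)"
  then have "continuous_on UNIV (\<lambda>t. fst p (clamp 0 T t))"
    by (intro continuous_on_clamp_real curve_space_continuous) (auto simp: space_pair_measure)
  from continuous_on_tendsto_compose[OF this floor_grid_tendsto]
  show "(\<lambda>m. fst p (clamp 0 T (of_int \<lfloor>real (Suc m) * snd p\<rfloor> / real (Suc m)))) \<longlonglongrightarrow> fst p (clamp 0 T (snd p))"
    by simp
qed

lemma emeasure_occupation_eq_nn_integral_clamp:
  fixes \<gamma> :: "real \<Rightarrow> 'a::euclidean_space"
  assumes "continuous_on {0..T} \<gamma>" and B: "B \<in> sets borel"
  shows "emeasure lborel {t \<in> {0..T}. \<gamma> t \<in> B}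
    = (\<integral>\<^sup>+ t. indicator {0..T} t * indicator B (\<gamma> (clamp 0 T t)) \<partial>lborel)"
proof -
  have "(\<lambda>t. \<gamma> (clamp 0 T t)) \<in> borel_measurable borel"
    by (intro borel_measurable_continuous_onI continuous_on_clamp_real assms(1))
  then have "{0..T} \<inter> (\<lambda>t. \<gamma> (clamp 0 T t)) -` B \<in> sets borel"
    using B by (intro sets.Int) (auto intro: measurable_sets_borel)
  also have "{0..T} \<inter> (\<lambda>t. \<gamma> (clamp 0 T t)) -` B = {t \<in> {0..T}. \<gamma> t \<in> B}"
    by (auto simp: clamp_real_id)
  finally have "{t \<in> {0..T}. \<gamma> t \<in> B} \<in> sets lborel" by simp
  then have "emeasure lborel {t \<in> {0..T}. \<gamma> t \<in> B} = (\<integral>\<^sup>+ t. indicator {t \<in> {0..T}. \<gamma> t \<in> B} t \<partial>lborel)"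
    by (rule nn_integral_indicator[symmetric])
  also have "\<dots> = (\<integral>\<^sup>+ t. indicator {0..T} t * indicator B (\<gamma> (clamp 0 T t)) \<partial>lborel)"
    by (intro nn_integral_cong) (auto simp: indicator_def clamp_real_id)
  finally show ?thesis .
qed

lemma Gamma_set_measurable:
  assumes T: "0 \<le> T" and B: "B \<in> sets borel"
  shows "Gamma_set T B \<inter> space (curve_space T) \<in> sets (curve_space T)"
proof -
  define occupation where
    "occupation \<gamma> = (\<integral>\<^sup>+ t. indicator {0..T} t * indicator B (\<gamma> (clamp 0 T t)) \<partial>lborel)" for \<gamma>
  have "(\<lambda>p. indicator {0..T} (snd p) * indicator B (fst p (clamp 0 T (snd p))) :: ennreal)
      \<in> borel_measurable (curve_space T \<Otimes>\<^sub>M lborel)"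
    using measurable_curve_eval_clamp[OF T] B by measurable
  from lborel.borel_measurable_nn_integral_fst[OF this]
  have "occupation \<in> borel_measurable (curve_space T)" unfolding occupation_def by simp
  then have "{\<gamma> \<in> space (curve_space T). 0 < occupation \<gamma>} \<in> sets (curve_space T)"
    by measurable
  also have "{\<gamma> \<in> space (curve_space T). 0 < occupation \<gamma>} = Gamma_set T B \<inter> space (curve_space T)"
    using emeasure_occupation_eq_nn_integral_clamp[OF curve_space_continuous B]
    by (auto simp: Gamma_set_def occupation_def)
  finally show ?thesis .
qed

section \<open>Superpositions of curves\<close>

locale curve_superposition = finite_measure \<mu>
  for \<mu> :: "(real \<Rightarrow> real \<times> real) measure" +
  fixes T :: real and \<rho> :: "real \<Rightarrow> real \<times> real \<Rightarrow> real"
  assumes T: "0 \<le> T"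
    and sets_curves: "sets \<mu> = sets (curve_space T)"
    and density_borel: "(\<lambda>tx. \<rho> (fst tx) (snd tx)) \<in> borel_measurable borel"
    and density_nonneg: "\<And>t x. 0 \<le> \<rho> t x"
    and marginal: "\<And>t. t \<in> {0..T} \<Longrightarrow>
      distr \<mu> lborel (\<lambda>\<gamma>. torus_proj (\<gamma> t)) = density lborel (\<lambda>x. ennreal (\<rho> t x) * indicator unit_cell x)"
begin

lemma measurable_eval: "t \<in> {0..T} \<Longrightarrow> (\<lambda>\<gamma>. \<gamma> t) \<in> borel_measurable \<mu>"
  using measurable_curve_eval by (simp add: measurable_cong_sets[OF sets_curves refl])

lemma measurable_eval_clamp[measurable]:
  "(\<lambda>p. fst p (clamp 0 T (snd p))) \<in> borel_measurable (\<mu> \<Otimes>\<^sub>M lborel)"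
  using measurable_curve_eval_clamp[OF T]
  by (simp add: measurable_cong_sets[OF sets_pair_measure_cong[OF sets_curves refl] refl])

lemma density_slice_borel[measurable]: "\<rho> t \<in> borel_measurable borel"
proof -
  have "(\<lambda>x::real \<times> real. (t, x)) \<in> borel_measurable borel" by simp
  from measurable_compose[OF this density_borel] show ?thesis by simp
qed

lemma density_spacetime_borel[measurable]:
  "(\<lambda>tx. \<rho> (fst tx) (snd tx)) \<in> borel_measurable (lborel \<Otimes>\<^sub>M lborel)"
  using density_borel
  by (simp add: measurable_cong_sets[OF sets_pair_measure_cong[OF sets_lborel sets_lborel] refl] borel_prod)

lemma marginal_density:
  "t \<in> {0..T} \<Longrightarrow> distr \<mu> lborel (\<lambda>\<gamma>. torus_proj (\<gamma> t)) = density lborel (\<lambda>x. ennreal (\<rho> t x * indicator unit_cell x))"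
proof -
  have "(\<lambda>x. ennreal (\<rho> t x) * indicator unit_cell x) = (\<lambda>x. ennreal (\<rho> t x * indicator unit_cell x))"
    by (auto simp: indicator_def)
  with marginal show "t \<in> {0..T} \<Longrightarrow> ?thesis" by simp
qed

lemma marginal_integral:
  fixes F :: "real \<times> real \<Rightarrow> real"
  assumes "F \<in> borel_measurable borel" "periodic2 F" "t \<in> {0..T}"
  shows "(\<integral>\<gamma>. F (\<gamma> t) \<partial>\<mu>) = (\<integral>x. \<rho> t x * indicator unit_cell x * F x \<partial>lborel)"
proof -
  have proj: "(\<lambda>\<gamma>. torus_proj (\<gamma> t)) \<in> measurable \<mu> lborel"
    using measurable_eval[OF assms(3)] by simp
  have "(\<integral>\<gamma>. F (\<gamma> t) \<partial>\<mu>) = (\<integral>\<gamma>. F (torus_proj (\<gamma> t)) \<partial>\<mu>)"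
    using periodic2_torus_proj[OF assms(2)] by simp
  also have "\<dots> = (\<integral>x. F x \<partial>distr \<mu> lborel (\<lambda>\<gamma>. torus_proj (\<gamma> t)))"
    using assms(1) by (intro integral_distr[symmetric] proj) simp
  also have "\<dots> = (\<integral>x. (\<rho> t x * indicator unit_cell x) *\<^sub>R F x \<partial>lborel)"
    using assms density_nonneg by (simp add: marginal_density integral_density)
  finally show ?thesis by simp
qed

lemma marginal_mass:
  assumes "t \<in> {0..T}"
  shows "(\<integral>\<^sup>+x. ennreal (\<rho> t x * indicator unit_cell x) \<partial>lborel) = emeasure \<mu> (space \<mu>)"
proof -
  have proj: "(\<lambda>\<gamma>. torus_proj (\<gamma> t)) \<in> measurable \<mu> lborel"
    using measurable_eval[OF assms] by simp
  have "(\<integral>\<^sup>+x. ennreal (\<rho> t x * indicator unit_cell x) \<partial>lborel)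
      = emeasure (density lborel (\<lambda>x. ennreal (\<rho> t x * indicator unit_cell x))) UNIV"
    by (simp add: emeasure_density)
  also have "\<dots> = emeasure \<mu> (space \<mu>)"
    using emeasure_distr[OF proj, of UNIV] by (simp add: marginal_density[OF assms])
  finally show ?thesis .
qed

lemma integrable_spacetime_density:
  "integrable (lborel \<Otimes>\<^sub>M lborel)
     (\<lambda>p. indicator {0..T} (fst p) * (\<rho> (fst p) (snd p) * indicator unit_cell (snd p)) :: real)"
proof (rule integrableI_nonneg)
  let ?f = "\<lambda>p. ennreal (indicator {0..T} (fst p) * (\<rho> (fst p) (snd p) * indicator unit_cell (snd p)))"
  have "integral\<^sup>N (lborel \<Otimes>\<^sub>M lborel) ?f
      = (\<integral>\<^sup>+t. \<integral>\<^sup>+x. ennreal (indicator {0..T} t * (\<rho> t x * indicator unit_cell x)) \<partial>lborel \<partial>lborel)"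
    using lborel.nn_integral_fst[of ?f lborel] by simp
  also have "\<dots> = (\<integral>\<^sup>+t. emeasure \<mu> (space \<mu>) * indicator {0..T} t \<partial>lborel)"
  proof (intro nn_integral_cong)
    fix t :: real
    show "(\<integral>\<^sup>+x. ennreal (indicator {0..T} t * (\<rho> t x * indicator unit_cell x)) \<partial>lborel)
        = emeasure \<mu> (space \<mu>) * indicator {0..T} t"
      by (cases "t \<in> {0..T}") (simp_all add: marginal_mass)
  qed
  also have "\<dots> = emeasure \<mu> (space \<mu>) * ennreal T"
    using T by (simp add: nn_integral_cmult_indicator)
  also have "\<dots> < \<infinity>"
    by (simp add: less_top[symmetric] ennreal_mult_eq_top_iff)
  finally show "integral\<^sup>N (lborel \<Otimes>\<^sub>M lborel) ?f < \<infinity>" .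
qed (auto simp: density_nonneg)

lemma integral_time_integrated_density:
  fixes F :: "real \<times> real \<Rightarrow> real"
  assumes F: "F \<in> borel_measurable borel" "periodic2 F" and F_bound: "\<And>x. \<bar>F x\<bar> \<le> C"
  shows "(LINT x:unit_cell|lborel. (LINT t:{0..T}|lborel. \<rho> t x) * F x)
    = (LINT t:{0..T}|lborel. \<integral>\<gamma>. F (\<gamma> t) \<partial>\<mu>)"
proof -
  define d where "d p = indicator {0..T} (fst p) * (\<rho> (fst p) (snd p) * indicator unit_cell (snd p))"
    for p :: "real \<times> (real \<times> real)"
  have d_nonneg: "0 \<le> d p" for p by (simp add: d_def density_nonneg)
  have "integrable (lborel \<Otimes>\<^sub>M lborel) (\<lambda>p. d p * F (snd p))"
  proof (rule Bochner_Integration.integrable_bound)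
    show "integrable (lborel \<Otimes>\<^sub>M lborel) (\<lambda>p. C * d p)"
      using integrable_spacetime_density unfolding d_def by (rule integrable_mult_right)
    have "\<bar>F (snd p)\<bar> * d p \<le> \<bar>C\<bar> * d p" for p
      using F_bound[of "snd p"] d_nonneg[of p] by (intro mult_right_mono) auto
    then show "AE p in lborel \<Otimes>\<^sub>M lborel. norm (d p * F (snd p)) \<le> norm (C * d p)"
      using d_nonneg by (simp add: abs_mult mult.commute)
  qed (use F in \<open>simp add: d_def\<close>)
  then have swap: "(\<integral>x. \<integral>t. d (t, x) * F x \<partial>lborel \<partial>lborel) = (\<integral>t. \<integral>x. d (t, x) * F x \<partial>lborel \<partial>lborel)"
    using lborel_pair.Fubini_integral[of "\<lambda>t x. d (t, x) * F x"] by (simp add: case_prod_beta')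
  have "(LINT x:unit_cell|lborel. (LINT t:{0..T}|lborel. \<rho> t x) * F x) = (\<integral>x. \<integral>t. d (t, x) * F x \<partial>lborel \<partial>lborel)"
    unfolding set_lebesgue_integral_def d_def
    by (intro Bochner_Integration.integral_cong) (simp_all add: mult_ac)
  also note swap
  also have "(\<integral>t. \<integral>x. d (t, x) * F x \<partial>lborel \<partial>lborel) = (LINT t:{0..T}|lborel. \<integral>\<gamma>. F (\<gamma> t) \<partial>\<mu>)"
    unfolding set_lebesgue_integral_def
  proof (intro Bochner_Integration.integral_cong refl)
    fix t
    show "(\<integral>x. d (t, x) * F x \<partial>lborel) = indicator {0..T} t *\<^sub>R (\<integral>\<gamma>. F (\<gamma> t) \<partial>\<mu>)"
      by (cases "t \<in> {0..T}") (simp_all add: d_def marginal_integral[OF F] mult_ac)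
  qed
  finally show ?thesis .
qed

lemma integral_swap_time_curves:
  fixes F :: "real \<times> real \<Rightarrow> real"
  assumes F: "F \<in> borel_measurable borel" and F_bound: "\<And>x. \<bar>F x\<bar> \<le> C"
  shows "(LINT t:{0..T}|lborel. \<integral>\<gamma>. F (\<gamma> t) \<partial>\<mu>) = (\<integral>\<gamma>. (LINT t:{0..T}|lborel. F (\<gamma> t)) \<partial>\<mu>)"
proof -
  interpret curves_time: pair_sigma_finite \<mu> "lborel :: real measure"
    by (intro pair_sigma_finite.intro sigma_finite_measure_axioms lborel.sigma_finite_measure_axioms)
  define k where "k p = indicator {0..T} (snd p) * F (fst p (clamp 0 T (snd p)))"
    for p :: "(real \<Rightarrow> real \<times> real) \<times> real"
  have "integrable (\<mu> \<Otimes>\<^sub>M lborel) k"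
  proof (rule Bochner_Integration.integrable_bound)
    have "emeasure (\<mu> \<Otimes>\<^sub>M lborel) (space \<mu> \<times> {0..T}) = emeasure \<mu> (space \<mu>) * ennreal T"
      using lborel.emeasure_pair_measure_Times[of "space \<mu>" \<mu> "{0..T}"] T by simp
    also have "\<dots> < \<infinity>"
      by (simp add: less_top[symmetric] ennreal_mult_eq_top_iff)
    finally show "integrable (\<mu> \<Otimes>\<^sub>M lborel) (\<lambda>p. C * indicator (space \<mu> \<times> {0..T}) p)"
      by (intro integrable_mult_right integrable_real_indicator) auto
    show "AE p in \<mu> \<Otimes>\<^sub>M lborel. norm (k p) \<le> norm (C * indicator (space \<mu> \<times> {0..T}) p)"
      using F_bound order_trans[OF abs_ge_zero F_bound]
      by (intro AE_I2) (auto simp: k_def indicator_def space_pair_measure)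
    note F[measurable]
    show "k \<in> borel_measurable (\<mu> \<Otimes>\<^sub>M lborel)" unfolding k_def by measurable
  qed
  then have "(\<integral>t. \<integral>\<gamma>. k (\<gamma>, t) \<partial>\<mu> \<partial>lborel) = (\<integral>\<gamma>. \<integral>t. k (\<gamma>, t) \<partial>lborel \<partial>\<mu>)"
    using curves_time.Fubini_integral[of "\<lambda>\<gamma> t. k (\<gamma>, t)"] by (simp add: case_prod_beta')
  moreover have "(\<integral>\<gamma>. k (\<gamma>, t) \<partial>\<mu>) = indicator {0..T} t *\<^sub>R (\<integral>\<gamma>. F (\<gamma> t) \<partial>\<mu>)" for t
    by (cases "t \<in> {0..T}") (simp_all add: k_def clamp_real_id)
  moreover have "(\<integral>t. k (\<gamma>, t) \<partial>lborel) = (LINT t:{0..T}|lborel. F (\<gamma> t))" for \<gamma>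
    unfolding set_lebesgue_integral_def k_def
    by (intro Bochner_Integration.integral_cong) (auto simp: indicator_def clamp_real_id)
  ultimately show ?thesis
    unfolding set_lebesgue_integral_def by simp
qed

end

section \<open>The divergence identity\<close>

lemma open_torus_ball: "open (torus_ball c r)"
proof -
  have "torus_ball c r = (\<Union>k\<in>Z2. ball (c + k) r)"
    unfolding torus_ball_def by (rule set_eqI) (simp add: dist_commute)
  then show ?thesis by (simp add: open_UN)
qed

lemma tsupport_vanishes: "tsupport f \<subseteq> U \<Longrightarrow> x \<notin> U \<Longrightarrow> f x = 0"
  unfolding tsupport_def using closure_subset[of "{x. f x \<noteq> 0}"] by auto

text \<open>The crossing set without the integral-curve condition: the two agree \<open>\<eta>\<close>-almost
  everywhere, but only this one is measurable.\<close>

definition crossing_curves ::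
  "(real \<Rightarrow> real \<times> real) measure \<Rightarrow> real \<Rightarrow> (real \<times> real) set \<Rightarrow> (real \<Rightarrow> real \<times> real) set" where
  "crossing_curves \<eta> T B = {\<gamma> \<in> Gamma_set T B \<inter> space \<eta>. \<gamma> 0 \<notin> B \<and> \<gamma> T \<notin> B}"

lemma sets_crossing_curves:
  assumes sets: "sets \<eta> = sets (curve_space T)" and T: "0 \<le> T" and B: "B \<in> sets borel"
  shows "crossing_curves \<eta> T B \<in> sets \<eta>"
proof -
  have space: "space \<eta> = space (curve_space T)" using sets_eq_imp_space_eq[OF sets] .
  have eval: "(\<lambda>\<gamma>. \<gamma> s) \<in> borel_measurable \<eta>" if "s \<in> {0..T}" for s
    using measurable_curve_eval[OF that] by (simp add: measurable_cong_sets[OF sets refl])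
  have [measurable]: "(\<lambda>\<gamma>. \<gamma> 0) \<in> borel_measurable \<eta>" "(\<lambda>\<gamma>. \<gamma> T) \<in> borel_measurable \<eta>"
    using eval T by auto
  note B[measurable]
  have "crossing_curves \<eta> T B = (Gamma_set T B \<inter> space \<eta>) \<inter> {\<gamma> \<in> space \<eta>. \<gamma> 0 \<notin> B \<and> \<gamma> T \<notin> B}"
    unfolding crossing_curves_def by blast
  also have "\<dots> \<in> sets \<eta>"
    using Gamma_set_measurable[OF T B, folded space sets] by measurable
  finally show ?thesis .
qed

lemma density_crossing_set:
  assumes curves: "AE \<gamma> in \<eta>. integral_curve b T \<gamma>"
  shows "density \<eta> (indicator (crossing_set b T B)) = density \<eta> (indicator (crossing_curves \<eta> T B))"
  unfolding density_def
proof (intro arg_cong[where f = "measure_of (space \<eta>) (sets \<eta>)"] ext nn_integral_cong_AE)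
  fix A
  from curves
  show "AE \<gamma> in \<eta>. indicator (crossing_set b T B) \<gamma> * indicator A \<gamma>
    = (indicator (crossing_curves \<eta> T B) \<gamma> * indicator A \<gamma> :: ennreal)"
    by (rule AE_mp) (auto intro!: AE_I2 simp: crossing_set_def crossing_curves_def indicator_def)
qed

lemma borel_measurable_transport_integrand:
  assumes "b \<in> borel_measurable borel" "smooth \<phi>"
  shows "(\<lambda>x. b x \<bullet> gradient \<phi> x) \<in> borel_measurable borel"
  using assms(1) borel_measurable_continuous_onI[OF smooth_continuous_gradient[OF assms(2)]]
  by measurable

lemma periodic2_transport_integrand:
  assumes "periodic2 b" "periodic2 \<phi>" "smooth \<phi>"
  shows "periodic2 (\<lambda>x. b x \<bullet> gradient \<phi> x)"
  using assms(1) periodic2_gradient[OF assms(2) smooth_differentiable[OF assms(3)]]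
  unfolding periodic2_def by simp

lemma bounded_transport_integrand:
  fixes b :: "real \<times> real \<Rightarrow> real \<times> real"
  assumes "bounded (range b)" "periodic2 \<phi>" "smooth \<phi>"
  obtains C where "\<And>x. \<bar>b x \<bullet> gradient \<phi> x\<bar> \<le> C"
proof -
  obtain Kb where Kb: "\<And>x. norm (b x) \<le> Kb" using assms(1) unfolding bounded_iff by blast
  obtain Kg where Kg: "\<And>x. norm (gradient \<phi> x) \<le> Kg"
    using bounded_range_periodic2[OF smooth_continuous_gradient[OF assms(3)]
        periodic2_gradient[OF assms(2) smooth_differentiable[OF assms(3)]]]
    unfolding bounded_iff by blast
  have "\<bar>b x \<bullet> gradient \<phi> x\<bar> \<le> Kb * Kg" for x
    using order_trans[OF Cauchy_Schwarz_ineq2 mult_mono[OF Kb Kg order_trans[OF norm_ge_zero Kb] norm_ge_zero]] .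
  then show ?thesis by (rule that)
qed

lemma set_integrable_bounded_comp_curve:
  fixes F :: "'a::euclidean_space \<Rightarrow> real" and \<gamma> :: "real \<Rightarrow> 'a"
  assumes F: "F \<in> borel_measurable borel" "\<And>x. \<bar>F x\<bar> \<le> C" and \<gamma>: "continuous_on {0..T} \<gamma>"
  shows "set_integrable lborel {0..T} (\<lambda>t. F (\<gamma> t))"
proof -
  have "(\<lambda>t. F (\<gamma> (clamp 0 T t))) \<in> borel_measurable borel"
    using F(1) borel_measurable_continuous_onI[OF continuous_on_clamp_real[OF \<gamma>]] by measurable
  then have "(\<lambda>t. indicator {0..T} t *\<^sub>R F (\<gamma> (clamp 0 T t))) \<in> borel_measurable lborel"
    by simp
  also have "(\<lambda>t. indicator {0..T} t *\<^sub>R F (\<gamma> (clamp 0 T t))) = (\<lambda>t. indicator {0..T} t *\<^sub>R F (\<gamma> t))"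
    by (auto simp: indicator_def clamp_real_id)
  finally have meas: "set_borel_measurable lborel {0..T} (\<lambda>t. F (\<gamma> t))"
    unfolding set_borel_measurable_def .
  have const: "set_integrable lborel {0..T} (\<lambda>_. C)"
    unfolding set_integrable_def by (rule borel_integrable_compact) auto
  have "AE t in lborel. t \<in> {0..T} \<longrightarrow> norm (F (\<gamma> t)) \<le> norm C"
    using order_trans[OF F(2) abs_ge_self] by simp
  with const meas show ?thesis
    by (rule set_integrable_bound)
qed

lemma integral_curve_flux_vanishes:
  fixes \<phi> :: "real \<times> real \<Rightarrow> real"
  assumes curve: "integral_curve b T \<gamma>" and cont: "continuous_on {0..T} \<gamma>" and T: "0 \<le> T"
    and b: "b \<in> borel_measurable borel" "bounded (range b)"
    and \<phi>: "smooth \<phi>" "\<phi> (\<gamma> 0) = 0" "\<phi> (\<gamma> T) = 0"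
    and F_bound: "\<And>x. \<bar>b x \<bullet> gradient \<phi> x\<bar> \<le> C"
  shows "(LINT t:{0..T}|lborel. b (\<gamma> t) \<bullet> gradient \<phi> (\<gamma> t)) = 0"
proof -
  obtain K where K: "\<And>x. norm (b x) \<le> K" using b(2) unfolding bounded_iff by blast
  have "set_integrable lborel {0..T} (\<lambda>t. b (\<gamma> t) \<bullet> gradient \<phi> (\<gamma> t))"
    using set_integrable_bounded_comp_curve[OF borel_measurable_transport_integrand[OF b(1) \<phi>(1)] F_bound cont] .
  then have "(LINT t:{0..T}|lborel. b (\<gamma> t) \<bullet> gradient \<phi> (\<gamma> t)) = integral {0..T} (\<lambda>t. b (\<gamma> t) \<bullet> gradient \<phi> (\<gamma> t))"
    and integrable: "(\<lambda>t. b (\<gamma> t) \<bullet> gradient \<phi> (\<gamma> t)) integrable_on {0..T}"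
    using set_borel_integral_eq_integral by blast+
  moreover have "((\<lambda>t. b (\<gamma> t) \<bullet> gradient \<phi> (\<gamma> t)) has_integral \<phi> (\<gamma> T) - \<phi> (\<gamma> 0)) {0..T}"
  proof (rule integral_curve_chain_rule)
    show "\<And>t. t \<in> {0..T} \<Longrightarrow> ((\<lambda>\<tau>. b (\<gamma> \<tau>)) has_integral \<gamma> t - \<gamma> 0) {0..t}"
      using curve unfolding integral_curve_def by blast
    show "\<And>\<tau>. \<tau> \<in> {0..T} \<Longrightarrow> norm (b (\<gamma> \<tau>)) \<le> K" using K .
    show "\<And>x. (\<phi> has_derivative (\<lambda>v. v \<bullet> gradient \<phi> x)) (at x)"
      using has_derivative_gradient[OF smooth_differentiable[OF \<phi>(1)]] .
    show "continuous_on UNIV (gradient \<phi>)" using smooth_continuous_gradient[OF \<phi>(1)] .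
    show "(\<lambda>t. b (\<gamma> t) \<bullet> gradient \<phi> (\<gamma> t)) integrable_on {0..T}" by (rule integrable)
  qed (rule T)
  ultimately show ?thesis using \<phi> by (simp add: integral_unique)
qed

lemma AE_crossing_flux_vanishes:
  fixes \<phi> :: "real \<times> real \<Rightarrow> real"
  assumes sets: "sets \<eta> = sets (curve_space T)" and T: "0 \<le> T" and B: "B \<in> sets borel"
    and curves: "AE \<gamma> in \<eta>. integral_curve b T \<gamma>"
    and b: "b \<in> borel_measurable borel" "bounded (range b)"
    and \<phi>: "smooth \<phi>" "tsupport \<phi> \<subseteq> B"
    and F_bound: "\<And>x. \<bar>b x \<bullet> gradient \<phi> x\<bar> \<le> C"
  shows "AE \<gamma> in density \<eta> (indicator (crossing_curves \<eta> T B)).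
    (LINT t:{0..T}|lborel. b (\<gamma> t) \<bullet> gradient \<phi> (\<gamma> t)) = 0"
proof -
  have flux: "(LINT t:{0..T}|lborel. b (\<gamma> t) \<bullet> gradient \<phi> (\<gamma> t)) = 0"
    if "\<gamma> \<in> crossing_curves \<eta> T B" "integral_curve b T \<gamma>" for \<gamma>
  proof (rule integral_curve_flux_vanishes[OF that(2) _ T b \<phi>(1) _ _ F_bound])
    show "continuous_on {0..T} \<gamma>"
      using that(1) sets_eq_imp_space_eq[OF sets] curve_space_continuous
      by (auto simp: crossing_curves_def)
    show "\<phi> (\<gamma> 0) = 0" "\<phi> (\<gamma> T) = 0"
      using that(1) tsupport_vanishes[OF \<phi>(2)] by (auto simp: crossing_curves_def)
  qed
  have "AE \<gamma> in \<eta>. (0::ennreal) < indicator (crossing_curves \<eta> T B) \<gamma> \<longrightarrow>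
      (LINT t:{0..T}|lborel. b (\<gamma> t) \<bullet> gradient \<phi> (\<gamma> t)) = 0"
    using curves by (rule AE_mp) (auto intro!: AE_I2 flux simp: indicator_def)
  then show ?thesis
    using sets_crossing_curves[OF sets T B] by (subst AE_density) auto
qed

theorem mainTheorem4:
  fixes T :: real
    and b :: "real \<times> real \<Rightarrow> real \<times> real"
    and \<rho> :: "real \<Rightarrow> real \<times> real \<Rightarrow> real"
    and \<eta> :: "(real \<Rightarrow> real \<times> real) measure"
    and c :: "real \<times> real" and r :: real
    and \<rho>B :: "real \<Rightarrow> real \<times> real \<Rightarrow> real"
  assumes T_pos: "T > 0"
    and b_borel: "b \<in> borel_measurable borel"
    and b_bounded: "bounded (range b)"
    and b_periodic: "periodic2 b"
    and b_BV: "torus_BV b"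
    and NI: "nearly_incompressible T b \<rho>"
    and eta_sets: "sets \<eta> = sets (curve_space T)"
    and eta_finite: "finite_measure \<eta>"
    and eta_conc: "AE \<gamma> in \<eta>. integral_curve b T \<gamma>"
    and eta_marg: "\<forall>t\<in>{0..T}. distr \<eta> lborel (\<lambda>\<gamma>. torus_proj (\<gamma> t))
                     = density lborel (\<lambda>x. ennreal (\<rho> t x) * indicator unit_cell x)"
    and c_rat: "fst c \<in> \<rat>" "snd c \<in> \<rat>"
    and r_rat: "r \<in> \<rat>" "r > 0"
    and \<rho>B_meas: "(\<lambda>tx. \<rho>B (fst tx) (snd tx)) \<in> borel_measurable borel"
    and \<rho>B_nonneg: "\<forall>t x. \<rho>B t x \<ge> 0"
    and \<rho>B_def: "\<forall>t\<in>{0..T}.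
        distr (density \<eta> (indicator (crossing_set b T (torus_ball c r)))) lborel (\<lambda>\<gamma>. torus_proj (\<gamma> t))
          = density lborel (\<lambda>x. ennreal (\<rho>B t x) * indicator unit_cell x)"
  shows "\<forall>\<phi>::real \<times> real \<Rightarrow> real. smooth \<phi> \<and> periodic2 \<phi> \<and> tsupport \<phi> \<subseteq> torus_ball c r \<longrightarrow>
           (LINT x:unit_cell|lborel.
              (LINT t:{0..T}|lborel. \<rho>B t (torus_proj x)) * frechet_derivative \<phi> (at x) (b x)) = 0"
proof (intro allI impI)
  fix \<phi> :: "real \<times> real \<Rightarrow> real"
  assume "smooth \<phi> \<and> periodic2 \<phi> \<and> tsupport \<phi> \<subseteq> torus_ball c r"
  then have \<phi>: "smooth \<phi>" "periodic2 \<phi>" and supp: "tsupport \<phi> \<subseteq> torus_ball c r" by auto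
  define B where "B = torus_ball c r"
  define F where "F x = b x \<bullet> gradient \<phi> x" for x
  have T: "0 \<le> T" and B_borel: "B \<in> sets borel"
    using T_pos borel_open[OF open_torus_ball] by (auto simp: B_def)
  obtain C where C: "\<And>x. \<bar>F x\<bar> \<le> C"
    using bounded_transport_integrand[OF b_bounded \<phi>(2,1)] unfolding F_def by blast
  have F: "F \<in> borel_measurable borel" "periodic2 F"
    unfolding F_def using borel_measurable_transport_integrand[OF b_borel \<phi>(1)]
      periodic2_transport_integrand[OF b_periodic \<phi>(2,1)] by auto
  interpret \<eta>: finite_measure \<eta> by (rule eta_finite)
  interpret crossing: curve_superposition "density \<eta> (indicator (crossing_curves \<eta> T B))" T \<rho>B
    using \<eta>.finite_measure_restricted[OF sets_crossing_curves[OF eta_sets T B_borel]] T eta_sets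
      \<rho>B_meas \<rho>B_nonneg \<rho>B_def density_crossing_set[OF eta_conc]
    by (simp add: curve_superposition_def curve_superposition_axioms_def B_def)
  have "(LINT x:unit_cell|lborel.
          (LINT t:{0..T}|lborel. \<rho>B t (torus_proj x)) * frechet_derivative \<phi> (at x) (b x))
      = (LINT x:unit_cell|lborel. (LINT t:{0..T}|lborel. \<rho>B t x) * F x)"
    by (intro set_lebesgue_integral_cong)
      (simp_all add: torus_proj_unit_cell F_def frechet_derivative_eq_gradient smooth_differentiable \<phi>(1))
  also have "\<dots> = (\<integral>\<gamma>. (LINT t:{0..T}|lborel. F (\<gamma> t)) \<partial>density \<eta> (indicator (crossing_curves \<eta> T B)))"
    using crossing.integral_time_integrated_density[OF F C] crossing.integral_swap_time_curves[OF F(1) C]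
    by simp
  also have "\<dots> = 0"
    using AE_crossing_flux_vanishes[OF eta_sets T B_borel eta_conc b_borel b_bounded \<phi>(1) supp[folded B_def] C[unfolded F_def]]
    unfolding F_def by (rule integral_eq_zero_AE)
  finally show "(LINT x:unit_cell|lborel.
      (LINT t:{0..T}|lborel. \<rho>B t (torus_proj x)) * frechet_derivative \<phi> (at x) (b x)) = 0" .
qed

end
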